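(* Let $\gamma$ be the Euler–Mascheroni constant and $\lambda(s)=\sum_{n\ge0}(2n+1)^{-s}$ (for real $s>1$). Then $$\lim_{x\to\infty}\left\{\lambda(\lambda(x))-\frac12\left[3^x-\Bigl(\frac95\Bigr)^x-\Bigl(\frac97\Bigr)^x+\Bigl(\frac{27}{25}\Bigr)^x-1\right]\right\}=\frac12(\gamma+\ln2).$$ *)

theory Defs
  imports "HOL-Analysis.Analysis"
begin

definition dirichlet_lambda :: "real \<Rightarrow> real" where
  "dirichlet_lambda s = (\<Sum>n. 1 / (2 * real n + 1) powr s)"

end

theory Submission
  imports Defs
begin

text \<open>Near \<open>s = 1\<close>, compare the \<open>n\<close>-th term \<open>(2n+1) powr -s\<close> of \<open>\<lambda>(s)\<close> with half the integral of
  \<open>t powr -s\<close> over \<open>[2n+1, 2n+3]\<close>. The integrals telescope to \<open>1/(2(s-1))\<close>, and the differences are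
  \<open>O(1/(2n+1)\<^sup>2)\<close> uniformly for \<open>1 < s \<le> 2\<close>, so \<open>\<lambda>(s) - 1/(2(s-1))\<close> tends to the sum of the
  differences at \<open>s = 1\<close>, which is \<open>lim (1 + 1/3 + ... + 1/(2N-1) - ln(2N+1)/2) = (\<gamma> + ln 2)/2\<close>.

  As \<open>x \<rightarrow> \<infinity>\<close>, \<open>\<lambda>(x) = 1 + 3 powr -x (1 + u)\<close> with \<open>u = (3/5) powr x + (3/7) powr x + O(3 powr -x)\<close>,
  so \<open>1/(\<lambda>(x) - 1) = 3 powr x (1 - u + u\<^sup>2 - ...)\<close> equals the bracket of the theorem up to \<open>o(1)\<close>;
  the \<open>O(3 powr -x)\<close> part contributes the \<open>-1\<close>. Since \<open>\<lambda>(x) \<rightarrow> 1\<^sup>+\<close>, the two expansions combine.\<close>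

lemma tendsto_powr_base_less_one:
  fixes q :: real
  assumes "0 < q" "q < 1"
  shows "((\<lambda>x. q powr x) \<longlongrightarrow> 0) at_top"
proof -
  have "filterlim (\<lambda>x. ln q * x) at_bot at_top"
    by (rule filterlim_tendsto_neg_mult_at_bot[OF tendsto_const _ filterlim_ident]) (use assms in simp)
  then show ?thesis
    using assms by (simp add: powr_def filterlim_compose[OF exp_at_bot] mult.commute)
qed

text \<open>For odd \<open>c\<close>, \<open>lambda_tail c x\<close> is \<open>c powr x\<close> times the part of the series of \<open>dirichlet_lambda x\<close>
  over the odd numbers \<open>\<ge> c\<close>.\<close>
definition lambda_tail :: "real \<Rightarrow> real \<Rightarrow> real" where
  "lambda_tail c x = (\<Sum>n. (c / (c + 2 * real n)) powr x)"

lemma dirichlet_lambda_eq_lambda_tail: "dirichlet_lambda = lambda_tail 1"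
  unfolding dirichlet_lambda_def lambda_tail_def by (simp add: powr_divide add.commute)

lemma summable_lambda_tail:
  assumes "c > 0" "x > 1"
  shows "summable (\<lambda>n. (c / (c + 2 * real n)) powr x)"
proof (rule summable_comparison_test'[where N = 1])
  show "summable (\<lambda>n. c powr x * real n powr (-x))"
    using assms by (intro summable_mult) (simp add: summable_real_powr_iff)
  fix n :: nat
  assume "n \<ge> 1"
  have "(c / (c + 2 * real n)) powr x = c powr x / (c + 2 * real n) powr x"
    using assms by (simp add: powr_divide)
  also have "\<dots> \<le> c powr x / real n powr x"
    using assms \<open>n \<ge> 1\<close> by (intro divide_left_mono powr_mono2 mult_pos_pos) auto
  also have "\<dots> = c powr x * real n powr (-x)"
    by (simp add: powr_minus_divide)
  finally show "norm ((c / (c + 2 * real n)) powr x) \<le> c powr x * real n powr (-x)"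
    by simp
qed

lemma lambda_tail_unfold:
  assumes "c > 0" "x > 1"
  shows "lambda_tail c x = 1 + (c / (c + 2)) powr x * lambda_tail (c + 2) x"
proof -
  have shift: "(c / (c + 2 * real (Suc n))) powr x
      = (c / (c + 2)) powr x * ((c + 2) / (c + 2 + 2 * real n)) powr x" for n
  proof -
    have "c + 2 > 0" "c + 2 + 2 * real n > 0"
      using assms by auto
    then have "c / (c + 2 + 2 * real n) = (c / (c + 2)) * ((c + 2) / (c + 2 + 2 * real n))"
      by simp
    moreover have "c + 2 * real (Suc n) = c + 2 + 2 * real n"
      by simp
    ultimately show ?thesis
      by (simp only:) (rule powr_mult)
  qed
  have "lambda_tail c x = 1 + (\<Sum>n. (c / (c + 2 * real (Suc n))) powr x)"
    unfolding lambda_tail_def using suminf_split_head[OF summable_lambda_tail[OF assms]] assms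
    by simp
  also have "(\<Sum>n. (c / (c + 2 * real (Suc n))) powr x) = (c / (c + 2)) powr x * lambda_tail (c + 2) x"
    unfolding shift lambda_tail_def
    by (rule suminf_mult) (use summable_lambda_tail[of "c + 2" x] assms in simp)
  finally show ?thesis .
qed

lemma lambda_tail_nonneg:
  assumes "c > 0" "x > 1"
  shows "lambda_tail c x \<ge> 0"
  unfolding lambda_tail_def using summable_lambda_tail[OF assms] by (intro suminf_nonneg) auto

lemma lambda_tail_antimono:
  assumes "c > 0" "1 < y" "y \<le> x"
  shows "lambda_tail c x \<le> lambda_tail c y"
  unfolding lambda_tail_def
proof (rule suminf_le)
  fix n
  have "0 \<le> c / (c + 2 * real n)" "c / (c + 2 * real n) \<le> 1"
    using assms by auto
  then show "(c / (c + 2 * real n)) powr x \<le> (c / (c + 2 * real n)) powr y"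
    using assms by (intro powr_mono') auto
qed (use summable_lambda_tail[of c x] summable_lambda_tail[of c y] assms in auto)

text \<open>Squeezed between \<open>1\<close> and \<open>1 + (c/(c+2)) powr x * lambda_tail (c+2) 2\<close>.\<close>
lemma tendsto_lambda_tail:
  assumes "c > 0"
  shows "(lambda_tail c \<longlongrightarrow> 1) at_top"
proof -
  define q where "q = c / (c + 2)"
  have q: "0 < q" "q < 1"
    using assms by (auto simp: q_def)
  have lower: "\<forall>\<^sub>F x in at_top. 1 \<le> lambda_tail c x"
    using eventually_gt_at_top[of 1]
  proof eventually_elim
    case (elim x)
    then show ?case
      using lambda_tail_unfold[of c x] lambda_tail_nonneg[of "c + 2" x] assms by simp
  qed
  have upper: "\<forall>\<^sub>F x in at_top. lambda_tail c x \<le> 1 + q powr x * lambda_tail (c + 2) 2"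
    using eventually_ge_at_top[of 2]
  proof eventually_elim
    case (elim x)
    then show ?case
      using lambda_tail_unfold[of c x] lambda_tail_antimono[of "c + 2" 2 x] assms
      by (simp add: q_def mult_left_mono)
  qed
  have "((\<lambda>x. 1 + q powr x * lambda_tail (c + 2) 2) \<longlongrightarrow> 1 + 0 * lambda_tail (c + 2) 2) at_top"
    by (intro tendsto_intros tendsto_powr_base_less_one q)
  then show ?thesis
    by (intro tendsto_sandwich[OF lower upper tendsto_const]) simp
qed

lemma dirichlet_lambda_leading_terms:
  assumes "x > 1"
  shows "3 powr x * (dirichlet_lambda x - 1)
       = 1 + (3/5) powr x + (3/7) powr x + (1/3) powr x * lambda_tail 9 x"
proof -
  have "dirichlet_lambda x
      = 1 + (1/3) powr x * (1 + (3/5) powr x * (1 + (5/7) powr x * (1 + (7/9) powr x * lambda_tail 9 x)))"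
    using lambda_tail_unfold[of 1 x] lambda_tail_unfold[of 3 x] lambda_tail_unfold[of 5 x]
      lambda_tail_unfold[of 7 x] assms
    by (simp add: dirichlet_lambda_eq_lambda_tail)
  then show ?thesis
    by (simp add: algebra_simps powr_mult[symmetric])
qed

text \<open>Applied with \<open>P = 3 powr x\<close>, \<open>a = (3/5) powr x\<close>, \<open>b = (3/7) powr x\<close>: every product of \<open>P\<close> with a
  monomial on the right is a power \<open>q powr x\<close> with \<open>q < 1\<close>, except \<open>P * c \<rightarrow> 1\<close>.\<close>
lemma inverse_expansion_identity:
  fixes P a b c :: real
  assumes "P \<noteq> 0" "1 + a + b + c \<noteq> 0"
  shows "1 / (2 * ((1 + a + b + c) / P)) - 1/2 * (P * (1 - a - b + a^2) - 1)
       = (P * (2*a*b - a^3 + b^2 - a^2*b) - P * c * (1 - a - b + a^2) + (1 + a + b + c))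
         / (2 * (1 + a + b + c))"
  using assms by (simp add: field_simps) (simp add: algebra_simps power2_eq_square power3_eq_cube)

lemma tendsto_half_inverse_dirichlet_lambda_minus_one:
  "((\<lambda>x. 1 / (2 * (dirichlet_lambda x - 1))
        - 1/2 * (3 powr x - (9/5) powr x - (9/7) powr x + (27/25) powr x - 1)) \<longlongrightarrow> 0) at_top"
proof -
  define a b c where "a x = (3/5) powr x" and "b x = (3/7) powr x"
    and "c x = (1/3) powr x * lambda_tail 9 x" for x :: real
  define N where "N x = 2 * (27/35) powr x - (81/125) powr x + (27/49) powr x - (81/175) powr x
    - lambda_tail 9 x * (1 - a x - b x + a x ^ 2) + (1 + a x + b x + c x)" for x :: real
  have powers: "3 powr x * a x = (9/5) powr x" "3 powr x * b x = (9/7) powr x"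
    "3 powr x * a x ^ 2 = (27/25) powr x" "3 powr x * (a x * b x) = (27/35) powr x"
    "3 powr x * a x ^ 3 = (81/125) powr x" "3 powr x * b x ^ 2 = (27/49) powr x"
    "3 powr x * (a x ^ 2 * b x) = (81/175) powr x" "3 powr x * c x = lambda_tail 9 x" for x :: real
    by (simp_all add: a_def b_def c_def powr_mult[symmetric] power2_eq_square power3_eq_cube)
  have expansion: "\<forall>\<^sub>F x in at_top. N x / (2 * (1 + a x + b x + c x))
      = 1 / (2 * (dirichlet_lambda x - 1))
        - 1/2 * (3 powr x - (9/5) powr x - (9/7) powr x + (27/25) powr x - 1)"
    using eventually_gt_at_top[of 1]
  proof eventually_elim
    case (elim x)
    have "c x \<ge> 0"
      using lambda_tail_nonneg[of 9 x] elim by (simp add: c_def)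
    then have pos: "1 + a x + b x + c x > 0"
      by (simp add: a_def b_def add_pos_nonneg)
    have "dirichlet_lambda x - 1 = (1 + a x + b x + c x) / 3 powr x"
      using dirichlet_lambda_leading_terms[OF elim] by (simp add: a_def b_def c_def field_simps)
    moreover have "3 powr x - (9/5) powr x - (9/7) powr x + (27/25) powr x
        = 3 powr x * (1 - a x - b x + a x ^ 2)"
      by (simp add: powers(1-3)[symmetric] algebra_simps)
    moreover have "3 powr x * (2 * a x * b x - a x ^ 3 + b x ^ 2 - a x ^ 2 * b x)
        - 3 powr x * c x * (1 - a x - b x + a x ^ 2) + (1 + a x + b x + c x) = N x"
      unfolding N_def powers[symmetric] by algebra
    ultimately show ?case
      using inverse_expansion_identity[of "3 powr x" "a x" "b x" "c x"] pos by simp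
  qed
  have "(N \<longlongrightarrow> 2 * 0 - 0 + 0 - 0 - 1 * (1 - 0 - 0 + 0 ^ 2) + (1 + 0 + 0 + 0 * 1)) at_top"
    unfolding N_def a_def b_def c_def
    by (intro tendsto_intros tendsto_powr_base_less_one tendsto_lambda_tail) auto
  moreover have "((\<lambda>x. 2 * (1 + a x + b x + c x)) \<longlongrightarrow> 2 * (1 + 0 + 0 + 0 * 1)) at_top"
    unfolding a_def b_def c_def
    by (intro tendsto_intros tendsto_powr_base_less_one tendsto_lambda_tail) auto
  ultimately have "((\<lambda>x. N x / (2 * (1 + a x + b x + c x))) \<longlongrightarrow> 0 / 2) at_top"
    by (intro tendsto_divide) auto
  then show ?thesis
    using expansion by (auto elim: Lim_transform_eventually)
qed

text \<open>The subtracted quotient is the mean of \<open>t powr -s\<close> over \<open>[a, a + 2]\<close>; both bounds come from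
  the mean value theorem.\<close>
lemma powr_minus_secant_bounds:
  fixes a s :: real
  assumes a: "a \<ge> 1" and s: "1 < s" "s \<le> 2"
  shows "0 \<le> a powr (-s) - (a powr (1 - s) - (a + 2) powr (1 - s)) / (2 * (s - 1))"
    and "a powr (-s) - (a powr (1 - s) - (a + 2) powr (1 - s)) / (2 * (s - 1)) \<le> 4 / a^2"
proof -
  have "\<exists>z. a < z \<and> z < a + 2 \<and>
      (a + 2) powr (1 - s) - a powr (1 - s) = (a + 2 - a) * ((1 - s) * z powr ((1 - s) - 1))"
    by (rule MVT2[where f = "\<lambda>u. u powr (1 - s)" and f' = "\<lambda>u. (1 - s) * u powr ((1 - s) - 1)"])
      (simp, rule has_real_derivative_powr, use a in linarith)
  then obtain \<xi> where xi: "a < \<xi>" "\<xi> < a + 2"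
    and secant: "(a + 2) powr (1 - s) - a powr (1 - s) = (a + 2 - a) * ((1 - s) * \<xi> powr ((1 - s) - 1))"
    by blast
  have "\<exists>z. a < z \<and> z < a + 2 \<and>
      (a + 2) powr (-s) - a powr (-s) = (a + 2 - a) * ((-s) * z powr ((-s) - 1))"
    by (rule MVT2[where f = "\<lambda>u. u powr (-s)" and f' = "\<lambda>u. (-s) * u powr ((-s) - 1)"])
      (simp, rule has_real_derivative_powr, use a in linarith)
  then obtain \<eta> where eta: "a < \<eta>" "\<eta> < a + 2"
    and diff: "(a + 2) powr (-s) - a powr (-s) = (a + 2 - a) * ((-s) * \<eta> powr ((-s) - 1))"
    by blast
  have "a powr (1 - s) - (a + 2) powr (1 - s) = 2 * (s - 1) * \<xi> powr (-s)"
    using secant by (simp add: algebra_simps)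
  then have secant_eq: "(a powr (1 - s) - (a + 2) powr (1 - s)) / (2 * (s - 1)) = \<xi> powr (-s)"
    using s by simp
  have "\<xi> powr (-s) \<le> a powr (-s)"
    using xi a s by (intro powr_mono2') auto
  then show "0 \<le> a powr (-s) - (a powr (1 - s) - (a + 2) powr (1 - s)) / (2 * (s - 1))"
    unfolding secant_eq by simp
  have "(a + 2) powr (-s) \<le> \<xi> powr (-s)"
    using xi a s by (intro powr_mono2') auto
  then have "a powr (-s) - (a powr (1 - s) - (a + 2) powr (1 - s)) / (2 * (s - 1))
      \<le> a powr (-s) - (a + 2) powr (-s)"
    unfolding secant_eq by simp
  also have "\<dots> = 2 * s * \<eta> powr (-s - 1)"
    using diff by (simp add: algebra_simps)
  also have "\<dots> \<le> 2 * 2 * \<eta> powr (-2)"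
    using eta a s by (intro mult_mono powr_mono) auto
  also have "\<dots> \<le> 2 * 2 * a powr (-2)"
    using eta a by (intro mult_left_mono powr_mono2') auto
  also have "\<dots> = 4 / a^2"
    using a by (simp add: powr_minus_divide)
  finally show "a powr (-s) - (a powr (1 - s) - (a + 2) powr (1 - s)) / (2 * (s - 1)) \<le> 4 / a^2" .
qed

text \<open>The \<open>n\<close>-th term of \<open>dirichlet_lambda s\<close> minus half the integral of \<open>t powr -s\<close> over
  \<open>[2n+1, 2n+3]\<close>, and its limit as \<open>s \<rightarrow> 1\<close>.\<close>
definition lambda_defect :: "nat \<Rightarrow> real \<Rightarrow> real" where
  "lambda_defect n s = 1 / (2 * real n + 1) powr s
     - ((2 * real n + 1) powr (1 - s) - (2 * real n + 3) powr (1 - s)) / (2 * (s - 1))"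

definition lambda_defect_at_one :: "nat \<Rightarrow> real" where
  "lambda_defect_at_one n = 1 / (2 * real n + 1) - (ln (2 * real n + 3) - ln (2 * real n + 1)) / 2"

lemma norm_lambda_defect_le:
  assumes "s \<in> {1<..2}"
  shows "norm (lambda_defect n s) \<le> 4 / (2 * real n + 1)^2"
proof -
  have shift: "2 * real n + 1 + 2 = 2 * real n + 3"
    by simp
  have "1 / (2 * real n + 1) powr s = (2 * real n + 1) powr (-s)"
    by (simp add: powr_minus_divide)
  then show ?thesis
    using powr_minus_secant_bounds[of "2 * real n + 1" s, unfolded shift] assms
    unfolding lambda_defect_def by auto
qed

lemma summable_inverse_odd_squared: "summable (\<lambda>n. C / (2 * real n + 1)^2)"
proof (rule summable_comparison_test'[where N = 0])
  have "summable (\<lambda>n. inverse (real n ^ 2))"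
    by (rule inverse_power_summable) simp
  then show "summable (\<lambda>n. \<bar>C\<bar> * inverse (real (Suc n) ^ 2))"
    by (subst summable_Suc_iff) (rule summable_mult)
  fix n :: nat
  have "real (Suc n) ^ 2 \<le> (2 * real n + 1)^2"
    by (intro power_mono) auto
  then show "norm (C / (2 * real n + 1)^2) \<le> \<bar>C\<bar> * inverse (real (Suc n) ^ 2)"
    by (simp add: divide_inverse abs_mult mult_left_mono le_imp_inverse_le)
qed

lemma sums_odd_powr_telescope:
  assumes "s > 1"
  shows "(\<lambda>n. ((2 * real n + 1) powr (1 - s) - (2 * real n + 3) powr (1 - s)) / (2 * (s - 1)))
           sums (1 / (2 * (s - 1)))"
proof -
  define g where "g n = (2 * real n + 1) powr (1 - s)" for n :: nat
  have "filterlim (\<lambda>n::nat. 2 * real n + 1) at_top sequentially"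
    by (rule filterlim_at_top_mono[OF filterlim_real_sequentially]) auto
  then have "g \<longlonglongrightarrow> 0"
    unfolding g_def using assms by (intro tendsto_neg_powr) auto
  then have "(\<lambda>n. g n - g (Suc n)) sums (g 0 - 0)"
    by (rule telescope_sums')
  moreover have "g n - g (Suc n) = (2 * real n + 1) powr (1 - s) - (2 * real n + 3) powr (1 - s)" for n
    unfolding g_def by (simp add: algebra_simps)
  ultimately have "(\<lambda>n. (2 * real n + 1) powr (1 - s) - (2 * real n + 3) powr (1 - s)) sums 1"
    by (simp add: g_def)
  from sums_divide[OF this, of "2 * (s - 1)"] show ?thesis
    by simp
qed

lemma dirichlet_lambda_minus_pole:
  assumes "s > 1"
  shows "dirichlet_lambda s - 1 / (2 * (s - 1)) = (\<Sum>n. lambda_defect n s)"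
proof -
  have "summable (\<lambda>n. 1 / (2 * real n + 1) powr s)"
    using summable_lambda_tail[of 1 s] assms by (simp add: powr_divide add.commute)
  then have "(\<lambda>n. 1 / (2 * real n + 1) powr s) sums dirichlet_lambda s"
    unfolding dirichlet_lambda_def by (rule summable_sums)
  from sums_diff[OF this sums_odd_powr_telescope[OF assms]] show ?thesis
    unfolding lambda_defect_def by (rule sums_unique)
qed

text \<open>At \<open>s = 1\<close> the difference quotient of \<open>t \<mapsto> (2n+1) powr (1-t) - (2n+3) powr (1-t)\<close>
  turns into its derivative \<open>ln (2n+3) - ln (2n+1)\<close>.\<close>
lemma tendsto_lambda_defect: "(lambda_defect n \<longlongrightarrow> lambda_defect_at_one n) (at 1 within S)"
proof -
  define a b where "a = 2 * real n + 1" and "b = 2 * real n + 3"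
  have ab: "a > 0" "b > 0"
    by (auto simp: a_def b_def)
  define F where "F = (\<lambda>t. a powr (1 - t) - b powr (1 - t))"
  have deriv: "((\<lambda>t. c powr (1 - t)) has_real_derivative - ln c) (at 1 within S)" if "c > 0" for c :: real
  proof -
    have "((\<lambda>t. c powr (1 - t)) has_real_derivative c powr (1 - 1) * (- 1 * ln c + 0 * (1 - 1) / c)) (at 1)"
      by (rule DERIV_powr) (use that in \<open>auto intro!: derivative_eq_intros\<close>)
    then show ?thesis
      using that by (simp add: has_field_derivative_at_within)
  qed
  have "(F has_real_derivative ln b - ln a) (at 1 within S)"
    using DERIV_diff[OF deriv[OF ab(1)] deriv[OF ab(2)]] by (simp add: F_def)
  then have "((\<lambda>t. (F t - F 1) / (t - 1)) \<longlongrightarrow> ln b - ln a) (at 1 within S)"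
    by (simp add: has_field_derivative_iff)
  then have "((\<lambda>t. 1 / a powr t - ((F t - F 1) / (t - 1)) / 2) \<longlongrightarrow> 1 / a powr 1 - (ln b - ln a) / 2)
      (at 1 within S)"
    using ab by (intro tendsto_intros) auto
  moreover have "(\<lambda>t. 1 / a powr t - ((F t - F 1) / (t - 1)) / 2) = lambda_defect n"
    by (auto simp: lambda_defect_def F_def a_def b_def)
  moreover have "1 / a powr 1 - (ln b - ln a) / 2 = lambda_defect_at_one n"
    using ab by (simp add: lambda_defect_at_one_def a_def b_def)
  ultimately show ?thesis
    by simp
qed

lemma sum_inverse_odd: "(\<Sum>n<N. 1 / (2 * real n + 1)) = harm (2 * N) - harm N / 2"
proof (induction N)
  case 0
  then show ?case
    by (simp add: harm_def)
next
  case (Suc N)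
  have "(\<Sum>n<Suc N. 1 / (2 * real n + 1)) = harm (2 * N) - harm N / 2 + 1 / (2 * real N + 1)"
    using Suc by simp
  also have "\<dots> = harm (2 * Suc N) - harm (Suc N) / 2"
  proof -
    have even: "harm (2 * Suc N) = harm (2 * N) + 1 / (2 * real N + 1) + 1 / (2 * (real N + 1))"
      by (simp add: harm_Suc inverse_eq_divide algebra_simps)
    have odd: "harm (Suc N) = harm N + 1 / (real N + 1)"
      by (simp add: harm_Suc inverse_eq_divide)
    show ?thesis
      unfolding even odd by (simp add: add_divide_distrib mult.commute)
  qed
  finally show ?case .
qed

lemma sum_ln_odd_telescope: "(\<Sum>n<N. ln (2 * real n + 3) - ln (2 * real n + 1)) = ln (2 * real N + 1)"
proof -
  have "(\<Sum>n<N. ln (2 * real n + 3) - ln (2 * real n + 1))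
      = (\<Sum>n<N. ln (2 * real (Suc n) + 1) - ln (2 * real n + 1))"
    by (intro sum.cong) (auto simp: algebra_simps)
  also have "\<dots> = ln (2 * real N + 1)"
    by (subst sum_lessThan_telescope) simp
  finally show ?thesis .
qed

text \<open>The partial sums are \<open>H\<^sub>2\<^sub>N - H\<^sub>N/2 - ln (2N+1)/2\<close>, and \<open>H\<^sub>m - ln m \<rightarrow> \<gamma>\<close> along
  \<open>m = 2N\<close> and \<open>m = N\<close>.\<close>
lemma lambda_defect_at_one_sums: "lambda_defect_at_one sums ((euler_mascheroni + ln 2) / 2)"
proof -
  define \<gamma> where "\<gamma> m = harm m - ln (real m)" for m :: nat
  have "(\<lambda>N. \<gamma> (2 * N)) \<longlonglongrightarrow> euler_mascheroni"
    unfolding \<gamma>_def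
    by (rule filterlim_compose[OF euler_mascheroni_LIMSEQ]) (simp add: mult_nat_left_at_top)
  moreover have "(\<lambda>N::nat. inverse (2 * real N)) \<longlonglongrightarrow> 0"
    by (intro tendsto_inverse_0_at_top filterlim_at_top_mono[OF filterlim_real_sequentially]) auto
  ultimately have "(\<lambda>N. \<gamma> (2 * N) - \<gamma> N / 2 + ln 2 / 2 - ln (1 + inverse (2 * real N)) / 2)
      \<longlonglongrightarrow> euler_mascheroni - euler_mascheroni / 2 + ln 2 / 2 - ln (1 + 0) / 2"
    unfolding \<gamma>_def[of N for N] by (intro tendsto_intros euler_mascheroni_LIMSEQ) auto
  moreover have "\<forall>\<^sub>F N in sequentially.
      \<gamma> (2 * N) - \<gamma> N / 2 + ln 2 / 2 - ln (1 + inverse (2 * real N)) / 2 = (\<Sum>n<N. lambda_defect_at_one n)"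
    using eventually_gt_at_top[of "0::nat"]
  proof eventually_elim
    case (elim N)
    have "(\<Sum>n<N. lambda_defect_at_one n)
        = (\<Sum>n<N. 1 / (2 * real n + 1)) - (\<Sum>n<N. ln (2 * real n + 3) - ln (2 * real n + 1)) / 2"
      unfolding lambda_defect_at_one_def by (simp add: sum_subtractf sum_divide_distrib diff_divide_distrib)
    also have "\<dots> = harm (2 * N) - harm N / 2 - ln (2 * real N + 1) / 2"
      unfolding sum_inverse_odd sum_ln_odd_telescope ..
    finally have "(\<Sum>n<N. lambda_defect_at_one n) = harm (2 * N) - harm N / 2 - ln (2 * real N + 1) / 2" .
    moreover have "ln (real (2 * N)) = ln 2 + ln (real N)"
      using elim by (simp add: ln_mult)
    moreover have "ln (1 + inverse (2 * real N)) = ln (2 * real N + 1) - ln 2 - ln (real N)"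
      using elim by (simp add: field_simps ln_div ln_mult)
    ultimately show ?case
      by (simp add: \<gamma>_def field_simps)
  qed
  ultimately show ?thesis
    unfolding sums_def by (auto elim: Lim_transform_eventually simp: field_simps)
qed

lemma tendsto_dirichlet_lambda_minus_pole:
  "((\<lambda>s. dirichlet_lambda s - 1 / (2 * (s - 1))) \<longlongrightarrow> (euler_mascheroni + ln 2) / 2)
     (at 1 within {1<..2})"
proof -
  have uniform: "uniform_limit {1<..2} (\<lambda>N s. \<Sum>n<N. lambda_defect n s)
      (\<lambda>s. \<Sum>n. lambda_defect n s) sequentially"
    by (rule Weierstrass_m_test[OF norm_lambda_defect_le summable_inverse_odd_squared])
  have "((\<lambda>s. \<Sum>n. lambda_defect n s) \<longlongrightarrow> (euler_mascheroni + ln 2) / 2) (at 1 within {1<..2})"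
    using lambda_defect_at_one_sums unfolding sums_def
    by (intro swap_uniform_limit[OF _ _ uniform])
      (auto intro!: always_eventually tendsto_sum tendsto_lambda_defect)
  moreover have "\<forall>\<^sub>F s in at 1 within {1<..2}.
      (\<Sum>n. lambda_defect n s) = dirichlet_lambda s - 1 / (2 * (s - 1))"
    unfolding eventually_at_filter
    by (intro always_eventually)
      (auto simp del: diff_divide_distrib simp: dirichlet_lambda_minus_pole[symmetric])
  ultimately show ?thesis
    by (rule Lim_transform_eventually)
qed

lemma tendsto_dirichlet_lambda_at_top: "(dirichlet_lambda \<longlongrightarrow> 1) at_top"
  using tendsto_lambda_tail[of 1] by (simp add: dirichlet_lambda_eq_lambda_tail)

lemma filterlim_dirichlet_lambda_at_top: "filterlim dirichlet_lambda (at 1 within {1<..2}) at_top"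
proof -
  have "\<forall>\<^sub>F x in at_top. dirichlet_lambda x > 1"
    using eventually_gt_at_top[of 1]
  proof eventually_elim
    case (elim x)
    then have "3 powr x * (dirichlet_lambda x - 1) > 0"
      using dirichlet_lambda_leading_terms lambda_tail_nonneg[of 9 x] by (simp add: add_pos_nonneg)
    then show ?case
      by (simp add: zero_less_mult_iff)
  qed
  moreover have "\<forall>\<^sub>F x in at_top. dirichlet_lambda x < 2"
    using order_tendstoD(2)[OF tendsto_dirichlet_lambda_at_top, of 2] by simp
  ultimately show ?thesis
    unfolding filterlim_at using tendsto_dirichlet_lambda_at_top by (auto elim: eventually_elim2)
qed

theorem mainTheorem13:
  shows "((\<lambda>x::real. dirichlet_lambda (dirichlet_lambda x)
            - 1/2 * (3 powr x - (9/5) powr x - (9/7) powr x + (27/25) powr x - 1))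
          \<longlongrightarrow> 1/2 * (euler_mascheroni + ln 2)) at_top"
proof -
  have "((\<lambda>x. (dirichlet_lambda (dirichlet_lambda x) - 1 / (2 * (dirichlet_lambda x - 1)))
      + (1 / (2 * (dirichlet_lambda x - 1))
         - 1/2 * (3 powr x - (9/5) powr x - (9/7) powr x + (27/25) powr x - 1)))
      \<longlongrightarrow> (euler_mascheroni + ln 2) / 2 + 0) at_top"
    using filterlim_compose[OF tendsto_dirichlet_lambda_minus_pole filterlim_dirichlet_lambda_at_top]
      tendsto_half_inverse_dirichlet_lambda_minus_one
    by (rule tendsto_add)
  then show ?thesis
    by simp
qed

end
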